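(* $\mathrm{nM}([2]) = \mathrm{nM}(\mathrm{N}) = \mathrm{N}$, where $[2]$ denotes the function $f : \mathbb{N} \to \mathbb{N}\cup\{+\infty\}$ with $f(1) = 2$ and $f(k) = +\infty$ for $k \ge 2$.
   Context: $\mathrm{N} : \mathbb{N} \to \mathbb{N}$ is defined by $\mathrm{N}(1) = 2$ and $\mathrm{N}(k) = \max_{i \in \{2,\dots,k\}} \min(2i, \mathrm{N}(k-i+1)+i)$ for $k \ge 2$. For a function $g : \mathbb{N} \to \mathbb{N} \cup \{+\infty\}$ and $k \ge 2$, $m \ge 4$, let $\mathrm{pdp}_g(k,m)$ be the set of pairs $(e_0,e_1) \in \mathbb{N}^2$ with (i) $e_0, e_1 \ge 2$; (ii) $e_0, e_1 \le k$; (iii) $e_0 + e_1 = m$; (iv) $e_0 \le e_1$; (v) $g(k - e_\varepsilon + 1) + e_\varepsilon \ge m$ for both $\varepsilon \in \{0,1\}$ (this only depends on the values $g(k')$ for $k' < k$). For $f : \mathbb{N} \to \mathbb{N} \cup \{+\infty\}$ with $f(1) = 2$, the function $f' = \mathrm{nM}(f)$ is defined recursively: $f'(1) = 2$, and for $k > 1$, with $m$ the largest integer in $\{4, \dots, 2k\}$ such that $\mathrm{pdp}_{f'}(k,m) \ne \emptyset$ (using the already defined values $f'(k')$, $k' < k$; note $(2,2) \in \mathrm{pdp}_{f'}(k,4)$), set $f'(k) = \min(m, f(k))$. *)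

theory Defs
  imports Main "HOL-Library.Extended_Nat"
begin

text \<open>Natural numbers here are the positive integers; functions are of type
  nat => nat or nat => enat and only their values at arguments >= 1 matter.
  enat is the type of natural numbers extended with infinity.\<close>

function N :: "nat \<Rightarrow> nat" where
  "N k = (if k \<le> 1 then 2
          else Max ((\<lambda>i. min (2 * i) (N (k - i + 1) + i)) ` {2..k}))"
  by auto
termination
  by (relation "measure id") auto

definition pdp :: "(nat \<Rightarrow> enat) \<Rightarrow> nat \<Rightarrow> nat \<Rightarrow> (nat \<times> nat) set" where
  "pdp g k m = {(e0, e1). 2 \<le> e0 \<and> 2 \<le> e1 \<and> e0 \<le> k \<and> e1 \<le> k \<and> e0 + e1 = m
      \<and> e0 \<le> e1
      \<and> g (k - e0 + 1) + enat e0 \<ge> enat m \<and> g (k - e1 + 1) + enat e1 \<ge> enat m}"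

text \<open>nM_tab f k is a table whose entries at 1..k are the values f'(1),...,f'(k)
  of f' = nM f (entries at other arguments are irrelevant).\<close>
fun nM_tab :: "(nat \<Rightarrow> enat) \<Rightarrow> nat \<Rightarrow> (nat \<Rightarrow> enat)" where
  "nM_tab f 0 = (\<lambda>_. 2)"
| "nM_tab f (Suc k) =
     (if Suc k = 1 then (nM_tab f k)(1 := 2)
      else (nM_tab f k)(Suc k :=
        min (enat (GREATEST m. m \<in> {4..2 * Suc k} \<and> pdp (nM_tab f k) (Suc k) m \<noteq> {}))
            (f (Suc k))))"

definition nM :: "(nat \<Rightarrow> enat) \<Rightarrow> (nat \<Rightarrow> enat)" where
  "nM f k = nM_tab f k k"

definition two_fun :: "nat \<Rightarrow> enat" where
  "two_fun k = (if k \<le> 1 then 2 else \<infinity>)"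

end

theory Submission
  imports Defs
begin

text \<open>N(k) is exactly the largest m for which pdp_N(k,m) is nonempty. If i attains the
  maximum defining N(k), the pair (N(k) - i, i) lies in pdp_N(k, N(k)); its first
  condition holds because N grows by at least one at each step. Conversely every pair
  (e0, e1) of pdp_N(k,m) has m \<le> min(2 e1, N(k - e1 + 1) + e1) \<le> N(k). Since the values
  of nM f at k only depend on f(k) and on earlier values, induction on k shows nM f = N
  for every f \<ge> N, in particular for f = [2] and f = N.\<close>

declare N.simps[simp del]

lemma N_one: "N 1 = 2"
  by (subst N.simps) simp

lemma N_eq_Max:
  "k \<ge> 2 \<Longrightarrow> N k = Max ((\<lambda>i. min (2 * i) (N (k - i + 1) + i)) ` {2..k})"
  by (subst N.simps) simp

lemma N_lower_bound:
  assumes "i \<in> {2..k}"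
  shows "min (2 * i) (N (k - i + 1) + i) \<le> N k"
  using assms by (simp add: N_eq_Max del: min_le_iff_disj)

lemma N_attained:
  assumes "k \<ge> 2"
  obtains i where "i \<in> {2..k}" "N k = min (2 * i) (N (k - i + 1) + i)"
proof -
  have "Max ((\<lambda>i. min (2 * i) (N (k - i + 1) + i)) ` {2..k})
          \<in> (\<lambda>i. min (2 * i) (N (k - i + 1) + i)) ` {2..k}"
    using assms by (intro Max_in) auto
  then show ?thesis
    using N_eq_Max[OF assms] that by auto
qed

lemma N_ge_2: "N k \<ge> 2"
proof (cases "k \<ge> 2")
  case True
  then obtain i where "i \<in> {2..k}" "N k = min (2 * i) (N (k - i + 1) + i)"
    by (rule N_attained)
  then show ?thesis by auto
next
  case False
  then show ?thesis by (subst N.simps) simp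
qed

lemma N_ge_4:
  assumes "k \<ge> 2"
  shows "N k \<ge> 4"
proof -
  have "min (2 * 2) (N (k - 2 + 1) + 2) \<le> N k"
    by (rule N_lower_bound) (use assms in auto)
  then show ?thesis
    using N_ge_2[of "k - 2 + 1"] by linarith
qed

lemma N_le_double: "k \<ge> 2 \<Longrightarrow> N k \<le> 2 * k"
  by (elim N_attained) auto

lemma N_Suc_ge:
  assumes "k \<ge> 1"
  shows "N (Suc k) \<ge> N k + 1"
proof (cases "k = 1")
  case True
  then show ?thesis
    using N_ge_4[of 2] N_one by (simp add: numeral_2_eq_2)
next
  case False
  with assms have "k \<ge> 2" by simp
  then obtain i where i: "i \<in> {2..k}" "N k = min (2 * i) (N (k - i + 1) + i)"
    by (rule N_attained)
  have "min (2 * (i + 1)) (N (Suc k - (i + 1) + 1) + (i + 1)) \<le> N (Suc k)"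
    by (rule N_lower_bound) (use i in auto)
  moreover have "Suc k - (i + 1) + 1 = k - i + 1"
    using i by auto
  ultimately show ?thesis
    using i by simp
qed

lemma N_add_ge: "a \<ge> 1 \<Longrightarrow> N (a + d) \<ge> N a + d"
proof (induction d)
  case 0
  then show ?case by simp
next
  case (Suc d)
  then show ?case
    using N_Suc_ge[of "a + d"] by simp
qed

lemma pdp_cong:
  assumes "\<And>j. 1 \<le> j \<Longrightarrow> j < k \<Longrightarrow> g j = h j"
  shows "pdp g k m = pdp h k m"
proof -
  have "\<And>e. 2 \<le> e \<Longrightarrow> e \<le> k \<Longrightarrow> g (k - e + 1) = h (k - e + 1)"
    by (rule assms) auto
  then show ?thesis
    unfolding pdp_def by (auto simp del: plus_enat_simps)
qed

lemma pdp_enat_iff: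
  "(e0, e1) \<in> pdp (\<lambda>j. enat (g j)) k m \<longleftrightarrow>
     2 \<le> e0 \<and> 2 \<le> e1 \<and> e0 \<le> k \<and> e1 \<le> k \<and> e0 + e1 = m \<and> e0 \<le> e1
     \<and> g (k - e0 + 1) + e0 \<ge> m \<and> g (k - e1 + 1) + e1 \<ge> m"
  by (simp add: pdp_def)

lemma pdp_N_at_N_nonempty:
  assumes "k \<ge> 2"
  shows "pdp (\<lambda>j. enat (N j)) k (N k) \<noteq> {}"
proof -
  obtain i where i: "i \<in> {2..k}" "N k = min (2 * i) (N (k - i + 1) + i)"
    using assms by (rule N_attained)
  define e0 where "e0 = N k - i"
  have "N k \<ge> i + 2"
    using i N_ge_2[of "k - i + 1"] by auto
  moreover have "N k \<le> 2 * i"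
    using i by simp
  ultimately have e0: "2 \<le> e0" "e0 \<le> i" "e0 + i = N k"
    by (auto simp: e0_def)
  have "N (k - i + 1 + (i - e0)) \<ge> N (k - i + 1) + (i - e0)"
    by (rule N_add_ge) simp
  moreover have "k - i + 1 + (i - e0) = k - e0 + 1"
    using i e0 by auto
  ultimately have "N (k - e0 + 1) \<ge> N (k - i + 1) + (i - e0)"
    by simp
  moreover have "N (k - i + 1) + i \<ge> N k"
    using i by simp
  ultimately have "N (k - e0 + 1) + e0 \<ge> N k"
    using e0 by linarith
  then have "(e0, i) \<in> pdp (\<lambda>j. enat (N j)) k (N k)"
    unfolding pdp_enat_iff using i e0 by auto
  then show ?thesis by blast
qed

lemma pdp_N_nonempty_le:
  assumes "k \<ge> 2" "pdp (\<lambda>j. enat (N j)) k m \<noteq> {}"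
  shows "m \<le> N k"
proof -
  obtain e0 e1 where "(e0, e1) \<in> pdp (\<lambda>j. enat (N j)) k m"
    using assms(2) by auto
  then have e: "2 \<le> e0" "e1 \<le> k" "e0 \<le> e1" "e0 + e1 = m" "N (k - e1 + 1) + e1 \<ge> m"
    unfolding pdp_enat_iff by auto
  have "min (2 * e1) (N (k - e1 + 1) + e1) \<le> N k"
    by (rule N_lower_bound) (use e in auto)
  then show ?thesis
    using e by simp
qed

lemma Greatest_pdp_N:
  assumes "k \<ge> 2"
  shows "(GREATEST m. m \<in> {4..2 * k} \<and> pdp (\<lambda>j. enat (N j)) k m \<noteq> {}) = N k"
proof (rule Greatest_equality)
  show "N k \<in> {4..2 * k} \<and> pdp (\<lambda>j. enat (N j)) k (N k) \<noteq> {}"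
    using N_ge_4 N_le_double pdp_N_at_N_nonempty assms by auto
qed (use pdp_N_nonempty_le assms in blast)

lemma nM_tab_eq_N:
  assumes "\<And>k. k \<ge> 2 \<Longrightarrow> f k \<ge> enat (N k)"
  shows "1 \<le> j \<Longrightarrow> j \<le> k \<Longrightarrow> nM_tab f k j = enat (N j)"
proof (induction k arbitrary: j)
  case 0
  then show ?case by simp
next
  case (Suc k)
  show ?case
  proof (cases "k = 0")
    case True
    then show ?thesis
      using Suc.prems N_one by (simp add: numeral_eq_enat)
  next
    case False
    have "pdp (nM_tab f k) (Suc k) m = pdp (\<lambda>j. enat (N j)) (Suc k) m" for m
      by (rule pdp_cong) (use Suc.IH in auto)
    then have "nM_tab f (Suc k) (Suc k) = min (enat (N (Suc k))) (f (Suc k))"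
      using Greatest_pdp_N[of "Suc k"] False by simp
    also have "\<dots> = enat (N (Suc k))"
      using assms[of "Suc k"] False by (simp add: min_def)
    finally show ?thesis
      using Suc False by (auto simp: le_Suc_eq)
  qed
qed

lemma nM_eq_N:
  assumes "\<And>k. k \<ge> 2 \<Longrightarrow> f k \<ge> enat (N k)" and "k \<ge> 1"
  shows "nM f k = enat (N k)"
  unfolding nM_def using nM_tab_eq_N[OF assms(1)] assms(2) by simp

theorem theorem13p15:
  shows "\<forall>k\<ge>1. nM two_fun k = enat (N k) \<and> nM (\<lambda>k. enat (N k)) k = enat (N k)"
  using nM_eq_N[of two_fun] nM_eq_N[of "\<lambda>k. enat (N k)"] by (simp add: two_fun_def)

end
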